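(* Let $\mathscr C$ be a circle pattern for a graph $G$ and an admissible labelling $\alpha:E(G)\to[\alpha_0,\pi)$ with $0<\alpha_0\le\pi/2$, and assume all kites are convex. For each vertex $v$ let $B(v)$ be the closed disc bounded by $\mathscr C(v)$ (radius $r(v)$), $D(v)$ the union of all kites $K_e$ for edges $e$ incident to $v$, and $S(v)=B(v)\cap D(v)$. Then there is a constant $C_0\ge1$, possibly depending on $\inf_{e\in E}\alpha(e)$, such that for every interior vertex $v$ there exists a disc $I(v)\subseteq S(v)$ whose radius $r_I(v)>0$ satisfies $r(v)\le C_0\,r_I(v)$.
   Context: $G$ is the graph on the white vertices of a b-quad-graph (a strongly regular cell decomposition into quadrilaterals with bipartite 1-skeleton), adjacent iff incident to a common face. A labelling is admissible if at each interior black vertex the labels of incident faces sum to $2\pi$. A circle pattern for $G$ and $\alpha$: circles $\mathscr C(v)$ with centers $c(v)$ and radii $r(v)$ such that circles of adjacent vertices intersect with exterior intersection angle $\alpha(e)$ (the angle at an intersection point between the radii to the two centers), together with the kites $K_e$ formed by the two centers and the two intersection points, all equally oriented and locally isomorphic to the b-quad-graph at interior vertices. *)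

theory Defs
  imports "HOL-Analysis.Analysis"
begin

(* A face is written (v, b1, w, b2) in its (positive) cyclic order,
   starting at a white vertex; the same face is also listed as its rotation (w, b2, v, b1). *)

type_synonym 'v face = "'v \<times> 'v \<times> 'v \<times> 'v"

fun rot :: "'v face \<Rightarrow> 'v face" where
  "rot (a, b, c, d) = (c, d, a, b)"

fun fverts :: "'v face \<Rightarrow> 'v set" where
  "fverts (a, b, c, d) = {a, b, c, d}"

fun dedges :: "'v face \<Rightarrow> ('v \<times> 'v) set" where
  "dedges (a, b, c, d) = {(a, b), (b, c), (c, d), (d, a)}"

(* strongly regular, consistently oriented cell decomposition into quadrilaterals with
   bipartite 1-skeleton (white/black colouring) *)
definition bquad :: "'v set \<Rightarrow> 'v set \<Rightarrow> 'v face set \<Rightarrow> bool" where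
  "bquad W B F \<longleftrightarrow>
     W \<inter> B = {} \<and>
     (\<forall>(a, b, c, d) \<in> F. a \<in> W \<and> c \<in> W \<and> b \<in> B \<and> d \<in> B \<and> a \<noteq> c \<and> b \<noteq> d) \<and>
     (\<forall>f \<in> F. rot f \<in> F) \<and>
     (\<forall>x \<in> W \<union> B. \<exists>f \<in> F. x \<in> fverts f) \<and>
     (\<forall>f \<in> F. \<forall>g \<in> F. dedges f \<inter> dedges g \<noteq> {} \<longrightarrow> g = f \<or> g = rot f) \<and>
     (\<forall>f \<in> F. \<forall>g \<in> F. g \<noteq> f \<and> g \<noteq> rot f \<longrightarrow>
        (fverts f \<inter> fverts g = {} \<or> (\<exists>x. fverts f \<inter> fverts g = {x}) \<or>
         (\<exists>x y. x \<in> W \<and> y \<in> B \<and> fverts f \<inter> fverts g = {x, y})))"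

definition faces_at_white :: "'v face set \<Rightarrow> 'v \<Rightarrow> 'v face set" where
  "faces_at_white F v = {f \<in> F. fst f = v}"

definition faces_at_black :: "'v face set \<Rightarrow> 'v \<Rightarrow> 'v face set" where
  "faces_at_black F b = {f \<in> F. fst (snd f) = b}"

(* interior white vertex: its incident faces form one closed cycle
   (v, b_0, w_0, b_1), (v, b_1, w_1, b_2), ..., (v, b_{n-1}, w_{n-1}, b_0) *)
definition interior_white :: "'v set \<Rightarrow> 'v face set \<Rightarrow> 'v \<Rightarrow> bool" where
  "interior_white W F v \<longleftrightarrow> v \<in> W \<and>
     (\<exists>n bs ws. n \<ge> 1 \<and> length bs = n \<and> length ws = n \<and> distinct bs \<and>
        faces_at_white F v = {(v, bs ! i, ws ! i, bs ! ((i + 1) mod n)) | i. i < n})"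

(* interior black vertex: its incident faces form one closed cycle
   (a_0, b, a_1, d_0), (a_1, b, a_2, d_1), ..., (a_{n-1}, b, a_0, d_{n-1}) *)
definition interior_black :: "'v set \<Rightarrow> 'v face set \<Rightarrow> 'v \<Rightarrow> bool" where
  "interior_black B F b \<longleftrightarrow> b \<in> B \<and>
     (\<exists>n as ds. n \<ge> 1 \<and> length as = n \<and> length ds = n \<and> distinct as \<and>
        faces_at_black F b = {(as ! i, b, as ! ((i + 1) mod n), ds ! i) | i. i < n})"

(* labelling alpha on edges {v,w} of G; admissible: at each interior black vertex the labels
   of the incident faces sum to 2 pi (each face at b corresponds to the edge {a,c} of G) *)
definition admissible :: "'v set \<Rightarrow> 'v face set \<Rightarrow> ('v set \<Rightarrow> real) \<Rightarrow> bool" where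
  "admissible B F \<alpha> \<longleftrightarrow>
     (\<forall>b. interior_black B F b \<longrightarrow>
        finite (faces_at_black F b) \<and>
        (\<Sum>(a, b', c, d) \<in> faces_at_black F b. \<alpha> {a, c}) = 2 * pi)"

definition ang :: "complex \<Rightarrow> complex \<Rightarrow> complex \<Rightarrow> real" where
  "ang p q s = arccos (Re (cnj (p - q) * (s - q)) / (cmod (p - q) * cmod (s - q)))"

(* The kite of the face (v, b1, w, b2): c v, c w are the circle centers, c b1, c b2 the
   intersection points.  Its closed region: the kite is symmetric about the diagonal
   c v -- c w, so the region is the union of the two triangles on that diagonal. *)
fun kite :: "('v \<Rightarrow> complex) \<Rightarrow> 'v face \<Rightarrow> complex set" where
  "kite c (v, b1, w, b2) = convex hull {c v, c b1, c w} \<union> convex hull {c v, c b2, c w}"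

fun kite_oriented :: "real \<Rightarrow> ('v \<Rightarrow> complex) \<Rightarrow> 'v face \<Rightarrow> bool" where
  "kite_oriented \<epsilon> c (v, b1, w, b2) \<longleftrightarrow>
     \<epsilon> * Im (cnj (c w - c v) * (c b2 - c v)) > 0 \<and>
     \<epsilon> * Im (cnj (c w - c v) * (c b1 - c v)) < 0"

(* Circle pattern for G and alpha.  c v (v white) is the center of the circle of v with radius
   r v; c b (b black) is the common intersection point of the circles of the white
   neighbours of b.  For every face (edge e = {v,w}) the circles intersect in the two
   points c b1, c b2 with exterior intersection angle alpha e (angle at the intersection point
   between the radii to the two centers); all kites are equally oriented; at interior white
   vertices the kites form a flower (interior angles at the center sum to 2 pi; note the
   interior kite angle at c v equals twice the angle between c b1 - c v and c w - c v);
   at interior black vertices this follows from admissibility. *)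
definition circle_pattern ::
  "'v set \<Rightarrow> 'v set \<Rightarrow> 'v face set \<Rightarrow> ('v set \<Rightarrow> real) \<Rightarrow>
   ('v \<Rightarrow> complex) \<Rightarrow> ('v \<Rightarrow> real) \<Rightarrow> bool" where
  "circle_pattern W B F \<alpha> c r \<longleftrightarrow>
     (\<forall>v \<in> W. r v > 0) \<and>
     (\<forall>(v, b1, w, b2) \<in> F.
        cmod (c b1 - c v) = r v \<and> cmod (c b2 - c v) = r v \<and>
        cmod (c b1 - c w) = r w \<and> cmod (c b2 - c w) = r w \<and>
        c b1 \<noteq> c b2 \<and>
        ang (c v) (c b1) (c w) = \<alpha> {v, w} \<and> ang (c v) (c b2) (c w) = \<alpha> {v, w}) \<and>
     (\<exists>\<epsilon> \<in> {1, -1}. \<forall>f \<in> F. kite_oriented \<epsilon> c f) \<and>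
     (\<forall>v. interior_white W F v \<longrightarrow>
        finite (faces_at_white F v) \<and>
        (\<Sum>(v', b1, w, b2) \<in> faces_at_white F v. 2 * ang (c b1) (c v) (c w)) = 2 * pi)"

definition Dset :: "'v face set \<Rightarrow> ('v \<Rightarrow> complex) \<Rightarrow> 'v \<Rightarrow> complex set" where
  "Dset F c v = \<Union> (kite c ` faces_at_white F v)"

definition Sset :: "'v face set \<Rightarrow> ('v \<Rightarrow> complex) \<Rightarrow> ('v \<Rightarrow> real) \<Rightarrow> 'v \<Rightarrow> complex set" where
  "Sset F c r v = cball (c v) (r v) \<inter> Dset F c v"

end

theory Submission
  imports Defs
begin

text \<open>
  The kites of the faces at an interior white vertex \<open>v\<close> close up into a flower around
  \<open>c v\<close>: each kite \<open>c v, c b\<^sub>1, c w, c b\<^sub>2\<close> is symmetric about \<open>c v c w\<close>, so it turns the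
  ray to \<open>c b\<^sub>1\<close> into the ray to \<open>c b\<^sub>2\<close> through twice the angle at \<open>c v\<close>, and these
  angles add up to \<open>2\<pi>\<close>. Hence every direction from \<open>c v\<close> lies in one of the triangles
  \<open>c v, c b, c w\<close>. The angle of such a triangle at \<open>c b\<close> is the intersection angle
  \<open>\<alpha> \<ge> \<alpha>\<^sub>0\<close>, and \<open>|c b - c v| = r v\<close>, so its side \<open>[c b, c w]\<close> stays at distance at least
  \<open>r v \<cdot> sin \<alpha>\<^sub>0\<close> from \<open>c v\<close>. Thus the disc of radius \<open>r v \<cdot> sin \<alpha>\<^sub>0\<close> about \<open>c v\<close> lies in
  \<open>S(v)\<close>, and \<open>C\<^sub>0 = 1 / sin \<alpha>\<^sub>0\<close> works.
\<close>

lemma abs_ang_arg_le_1: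
  "\<bar>Re (cnj (p - q) * (s - q)) / (cmod (p - q) * cmod (s - q))\<bar> \<le> 1"
proof -
  have "\<bar>Re (cnj (p - q) * (s - q))\<bar> \<le> cmod (cnj (p - q) * (s - q))"
    by (rule abs_Re_le_cmod)
  also have "\<dots> = cmod (p - q) * cmod (s - q)"
    by (simp only: norm_mult complex_mod_cnj)
  finally show ?thesis
    by (cases "cmod (p - q) * cmod (s - q) = 0") (auto simp: abs_divide divide_le_eq_1)
qed

lemma cos_ang: "cos (ang p q s) = Re (cnj (p - q) * (s - q)) / (cmod (p - q) * cmod (s - q))"
  unfolding ang_def by (rule cos_arccos_abs[OF abs_ang_arg_le_1])

lemma ang_le_pi: "ang p q s \<le> pi"
  unfolding ang_def using abs_ang_arg_le_1[of p q s]
  by (intro arccos_ubound) (auto dest: abs_le_D1 abs_le_D2 simp del: abs_divide)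

lemma ang_nonneg: "0 \<le> ang p q s"
  unfolding ang_def using abs_ang_arg_le_1[of p q s]
  by (intro arccos_lbound) (auto dest: abs_le_D1 abs_le_D2 simp del: abs_divide)

lemma ang_translate: "ang p q s = ang (p - q) 0 (s - q)"
  by (simp add: ang_def)

lemma norm_segment_diff_sq_ge:
  fixes p B W q :: complex
  assumes cosk: "cos (ang p B W) \<le> k" and "q \<in> closed_segment B W"
  shows "(cmod (B - p))\<^sup>2 * (1 - k\<^sup>2) \<le> (cmod (q - p))\<^sup>2"
proof -
  define R where "R = cmod (B - p)"
  obtain l where l: "0 \<le> l" "l \<le> 1" "q = B + of_real l * (W - B)"
    using assms(2) by (auto simp: in_segment scaleR_conv_of_real algebra_simps)
  have "R\<^sup>2 * (1 - k\<^sup>2) \<le> (cmod (q - p))\<^sup>2"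
  proof (cases "W = B \<or> R = 0")
    case True
    then show ?thesis using l by (auto simp: R_def algebra_simps)
  next
    case False
    define u where "u = p - B"
    define v where "v = W - B"
    define d where "d = Re (cnj u * v)"
    define L where "L = cmod v"
    have L: "L > 0" and R: "R > 0" using False unfolding L_def v_def R_def by auto
    have uR: "cmod u = R" unfolding u_def R_def by (simp add: norm_minus_commute)
    have dk: "d \<le> k * (R * L)"
      using cosk L R unfolding cos_ang d_def L_def u_def v_def uR[unfolded u_def]
      by (simp add: divide_le_eq mult.commute)
    have expand: "(cmod (q - p))\<^sup>2 = l\<^sup>2 * L\<^sup>2 - 2 * l * d + R\<^sup>2"
    proof -
      have "q - p = of_real l * v - u" unfolding l(3) u_def v_def by simp
      then have "(cmod (q - p))\<^sup>2 = (l * Re v - Re u)\<^sup>2 + (l * Im v - Im u)\<^sup>2"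
        by (simp add: cmod_power2)
      also have "\<dots> = l\<^sup>2 * ((Re v)\<^sup>2 + (Im v)\<^sup>2) - 2 * l * (Re u * Re v + Im u * Im v)
                    + ((Re u)\<^sup>2 + (Im u)\<^sup>2)"
        by (simp add: power2_eq_square algebra_simps)
      finally show ?thesis unfolding L_def d_def uR[symmetric] cmod_power2 by simp
    qed
    show ?thesis
    proof (cases "d \<le> 0")
      case True
      have "R\<^sup>2 * (1 - k\<^sup>2) \<le> R\<^sup>2" by (simp add: mult_left_le)
      moreover have "l * d \<le> 0" using True l(1) by (simp add: mult_nonneg_nonpos)
      moreover have "0 \<le> l\<^sup>2 * L\<^sup>2" by simp
      ultimately show ?thesis unfolding expand by linarith
    next
      case False
      \<comment> \<open>completing the square in \<open>l\<close>: the minimum over the whole line is \<open>R\<^sup>2 - d\<^sup>2 / L\<^sup>2\<close>\<close>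
      have "d\<^sup>2 \<le> k\<^sup>2 * R\<^sup>2 * L\<^sup>2"
        using power_mono[OF dk, of 2] False by (simp add: power_mult_distrib mult.assoc)
      moreover have "(l * L\<^sup>2 - d)\<^sup>2 = L\<^sup>2 * (l\<^sup>2 * L\<^sup>2 - 2 * l * d) + d\<^sup>2"
        by (simp add: power2_eq_square algebra_simps)
      moreover have "0 \<le> (l * L\<^sup>2 - d)\<^sup>2" by simp
      ultimately have "0 \<le> L\<^sup>2 * (l\<^sup>2 * L\<^sup>2 - 2 * l * d) + k\<^sup>2 * R\<^sup>2 * L\<^sup>2"
        by linarith
      then have "0 \<le> L\<^sup>2 * (l\<^sup>2 * L\<^sup>2 - 2 * l * d + k\<^sup>2 * R\<^sup>2)"
        by (simp add: algebra_simps)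
      then have "0 \<le> l\<^sup>2 * L\<^sup>2 - 2 * l * d + k\<^sup>2 * R\<^sup>2" using L by (simp add: zero_le_mult_iff)
      then show ?thesis unfolding expand by (simp add: algebra_simps)
    qed
  qed
  then show ?thesis unfolding R_def .
qed

lemma norm_segment_diff_ge:
  fixes p B W q :: complex
  assumes "0 \<le> \<alpha>\<^sub>0" "\<alpha>\<^sub>0 \<le> ang p B W" "q \<in> closed_segment B W"
  shows "cmod (B - p) * sin \<alpha>\<^sub>0 \<le> cmod (q - p)"
proof -
  have "cos (ang p B W) \<le> cos \<alpha>\<^sub>0"
    using assms(1,2) ang_le_pi[of p B W] by (intro cos_monotone_0_pi_le) auto
  then have "(cmod (B - p))\<^sup>2 * (1 - (cos \<alpha>\<^sub>0)\<^sup>2) \<le> (cmod (q - p))\<^sup>2"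
    using assms(3) by (rule norm_segment_diff_sq_ge)
  then have "(cmod (B - p) * sin \<alpha>\<^sub>0)\<^sup>2 \<le> (cmod (q - p))\<^sup>2"
    by (simp add: sin_squared_eq power_mult_distrib)
  then show ?thesis by (rule power2_le_imp_le) simp
qed

lemma cone_point_in_triangle:
  fixes p B W z :: complex
  assumes "0 \<le> \<alpha>\<^sub>0" "\<alpha>\<^sub>0 \<le> ang p B W"
    and z: "z - p = of_real a * (B - p) + of_real b * (W - p)" and ab: "0 \<le> a" "0 \<le> b"
    and near: "cmod (z - p) \<le> cmod (B - p) * sin \<alpha>\<^sub>0"
  shows "z \<in> convex hull {p, B, W}"
proof (cases "z = p")
  case True
  then show ?thesis by (simp add: hull_inc)
next
  case False
  have "a + b \<noteq> 0"
  proof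
    assume "a + b = 0"
    then have "a = 0" "b = 0" using ab by auto
    then show False using z False by simp
  qed
  with ab have "a + b > 0" by simp
  define l where "l = b / (a + b)"
  have l: "0 \<le> l" "l \<le> 1" "(a + b) * l = b" using \<open>a + b > 0\<close> ab by (auto simp: l_def)
  define q where "q = B + of_real l * (W - B)"
  have q_seg: "q \<in> closed_segment B W"
    unfolding in_segment q_def using l
    by (intro exI[of _ l]) (simp add: scaleR_conv_of_real algebra_simps)
  have "of_real (a + b) * (q - p) = of_real (a + b) * (B - p) + of_real ((a + b) * l) * (W - B)"
    unfolding q_def by (simp add: algebra_simps)
  also have "\<dots> = z - p" unfolding l(3) z by (simp add: algebra_simps)
  finally have "z - p = of_real (a + b) * (q - p)" by simp
  then have zq: "cmod (z - p) = (a + b) * cmod (q - p)"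
    using \<open>a + b > 0\<close> by (simp only: norm_mult norm_of_real abs_of_pos)
  have "(a + b) * cmod (q - p) \<le> cmod (q - p)"
    using zq near norm_segment_diff_ge[OF assms(1,2) q_seg] by linarith
  moreover have "0 < (a + b) * cmod (q - p)" using False by (simp flip: zq)
  ultimately have "a + b \<le> 1" by (simp add: mult_le_cancel_right1 zero_less_mult_iff)
  have "z = (1 - a - b) *\<^sub>R p + a *\<^sub>R B + b *\<^sub>R W"
    using z by (simp add: scaleR_conv_of_real algebra_simps)
  then show ?thesis
    unfolding convex_hull_3 using \<open>a + b \<le> 1\<close> ab by force
qed

lemma cnj_mult_eq_polar:
  fixes x y :: complex
  assumes eps: "\<epsilon> = 1 \<or> \<epsilon> = -1" and pos: "\<epsilon> * Im (cnj x * y) > 0"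
  shows "0 < ang x 0 y" "ang x 0 y < pi"
    "cnj x * y = of_real (cmod x * cmod y) * cis (\<epsilon> * ang x 0 y)"
proof -
  define z where "z = cnj x * y"
  define P where "P = cmod x * cmod y"
  define \<theta> where "\<theta> = ang x 0 y"
  have "x \<noteq> 0" "y \<noteq> 0" using pos by auto
  then have P: "P > 0" unfolding P_def by simp
  have cos: "cos \<theta> = Re z / P" unfolding \<theta>_def z_def P_def using cos_ang[of x 0 y] by simp
  have "(Re z)\<^sup>2 + (Im z)\<^sup>2 = P\<^sup>2"
    unfolding z_def P_def cmod_power2[symmetric] by (simp add: norm_mult power_mult_distrib)
  then have "(sin \<theta>)\<^sup>2 = (\<epsilon> * Im z / P)\<^sup>2"
    using P eps unfolding sin_squared_eq cos by (auto simp: field_simps)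
  moreover have "0 \<le> sin \<theta>" unfolding \<theta>_def using ang_nonneg ang_le_pi by (rule sin_ge_zero)
  moreover have "0 < \<epsilon> * Im z / P" using pos P unfolding z_def by simp
  ultimately have sin: "sin \<theta> = \<epsilon> * Im z / P" and "0 < sin \<theta>"
    by (auto simp: power2_eq_iff_nonneg)
  then show "0 < \<theta>" "\<theta> < pi"
    using ang_nonneg[of x 0 y] ang_le_pi[of x 0 y] unfolding \<theta>_def
    by (auto simp: order_le_less)
  have "sin (\<epsilon> * \<theta>) * P = Im z" "cos (\<epsilon> * \<theta>) * P = Re z"
    using eps P sin cos by auto
  then show "cnj x * y = of_real P * cis (\<epsilon> * \<theta>)"
    unfolding z_def by (intro complex_eqI) (simp_all add: mult.commute)
qed

lemma kite_center_rotation: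
  fixes x x' y :: complex
  assumes "cmod x' = cmod x" "cmod (x' - y) = cmod (x - y)" and eps: "\<epsilon> = 1 \<or> \<epsilon> = -1"
    and "\<epsilon> * Im (cnj y * x') > 0" "\<epsilon> * Im (cnj y * x) < 0"
  shows "0 < ang x 0 y" "ang x 0 y < pi"
    "y = of_real (cmod y / cmod x) * x * cis (\<epsilon> * ang x 0 y)"
    "x' = x * cis (2 * \<epsilon> * ang x 0 y)"
proof -
  define \<theta> where "\<theta> = ang x 0 y"
  have "\<epsilon> * Im (cnj x * y) > 0" "(- \<epsilon>) * Im (cnj x' * y) > 0"
    using assms(4,5) by (simp_all add: algebra_simps)
  note P = cnj_mult_eq_polar[OF eps this(1)] and
    P' = cnj_mult_eq_polar[of "- \<epsilon>", OF _ this(2)]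
  have "x \<noteq> 0" using assms(5) by auto
  have "(Re x')\<^sup>2 + (Im x')\<^sup>2 = (Re x)\<^sup>2 + (Im x)\<^sup>2"
    using assms(1) unfolding cmod_power2[symmetric] by simp
  moreover have "(cmod (x' - y))\<^sup>2 = (cmod (x - y))\<^sup>2" using assms(2) by simp
  ultimately have "Re (cnj x' * y) = Re (cnj x * y)"
    unfolding cmod_power2 by (simp add: power2_eq_square algebra_simps)
  then have \<theta>': "ang x' 0 y = \<theta>" unfolding \<theta>_def ang_def using assms(1) by simp
  show "0 < \<theta>" "\<theta> < pi" unfolding \<theta>_def by (fact P(1,2))+
  have xx: "x * cnj x = of_real ((cmod x)\<^sup>2)" "x' * cnj x' = of_real ((cmod x)\<^sup>2)"
    using assms(1) by (metis complex_norm_square)+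
  have A: "of_real ((cmod x)\<^sup>2) * y = x * of_real (cmod x * cmod y) * cis (\<epsilon> * \<theta>)"
    using arg_cong[OF P(3), of "\<lambda>t. x * t"] xx(1) unfolding \<theta>_def
    by (simp add: mult.assoc[symmetric])
  have B: "of_real ((cmod x)\<^sup>2) * y = x' * of_real (cmod x * cmod y) * cis (- \<epsilon> * \<theta>)"
    using arg_cong[OF P'(3), of "\<lambda>t. x' * t"] xx(2) eps unfolding \<theta>' assms(1)
    by (auto simp: mult.assoc[symmetric])
  show "y = of_real (cmod y / cmod x) * x * cis (\<epsilon> * \<theta>)"
    using A \<open>x \<noteq> 0\<close> by (simp add: field_simps power2_eq_square)
  have "y \<noteq> 0" using assms(5) by auto
  then have "x * cis (\<epsilon> * \<theta>) = x' * cis (- \<epsilon> * \<theta>)"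
    using A B \<open>x \<noteq> 0\<close> by (simp add: power2_eq_square)
  then have "x * cis (\<epsilon> * \<theta>) * cis (\<epsilon> * \<theta>) = x'"
    by (simp add: mult.assoc cis_mult)
  then show "x' = x * cis (2 * \<epsilon> * \<theta>)" by (simp add: mult.assoc cis_mult)
qed

lemma cis_in_cone:
  assumes "\<epsilon> = 1 \<or> \<epsilon> = -1" "0 < \<theta>" "\<theta> < pi" "0 \<le> s" "s \<le> \<theta>"
  obtains a b where "0 \<le> a" "0 \<le> b" "cis (\<epsilon> * s) = of_real a + of_real b * cis (\<epsilon> * \<theta>)"
  \<comment> \<open>the sine rule: \<open>sin \<theta> \<cdot> cis s = sin (\<theta> - s) + sin s \<cdot> cis \<theta>\<close>\<close>
proof
  have st: "sin \<theta> > 0" using assms by (simp add: sin_gt_zero)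
  show "0 \<le> sin (\<theta> - s) / sin \<theta>" "0 \<le> sin s / sin \<theta>"
    using assms st by (auto intro!: sin_ge_zero divide_nonneg_pos)
  have "cos s = sin (\<theta> - s) / sin \<theta> + sin s / sin \<theta> * cos \<theta>"
    using st by (simp add: field_simps sin_diff)
  then show "cis (\<epsilon> * s) = of_real (sin (\<theta> - s) / sin \<theta>) + of_real (sin s / sin \<theta>) * cis (\<epsilon> * \<theta>)"
    using assms(1) st by (auto intro: complex_eqI)
qed

lemma polar_form_nonneg_angle:
  fixes q x :: complex
  assumes "x \<noteq> 0" "\<epsilon> = 1 \<or> \<epsilon> = -1"
  obtains \<mu> t where "0 \<le> \<mu>" "0 \<le> t" "t \<le> 2 * pi" "q = of_real \<mu> * x * cis (\<epsilon> * t)"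
proof -
  define w where "w = q / x"
  define a where "a = \<epsilon> * Arg w"
  define t where "t = (if a \<ge> 0 then a else a + 2 * pi)"
  have "- pi \<le> a" "a \<le> pi" using Arg_bounded[of w] assms(2) unfolding a_def by auto
  then have t: "0 \<le> t" "t \<le> 2 * pi" unfolding t_def by auto
  have "cis (\<epsilon> * (2 * pi)) = 1" using assms(2) by (auto simp: complex_eq_iff)
  moreover have "cis (\<epsilon> * (a + 2 * pi)) = cis (\<epsilon> * a) * cis (\<epsilon> * (2 * pi))"
    by (simp add: cis_mult distrib_left)
  ultimately have "cis (\<epsilon> * (a + 2 * pi)) = cis (\<epsilon> * a)" by simp
  then have "cis (\<epsilon> * t) = cis (Arg w)"
    unfolding t_def a_def using assms(2) by auto
  moreover have "w = of_real (cmod w) * cis (Arg w)"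
    using rcis_cmod_Arg[of w] by (simp add: rcis_def)
  ultimately have "q = of_real (cmod w) * x * cis (\<epsilon> * t)"
    using assms(1) unfolding w_def by (simp add: field_simps)
  then show ?thesis using t that[of "cmod w" t] by simp
qed

lemma partial_sums_bracket:
  fixes f :: "nat \<Rightarrow> real"
  assumes "\<And>i. i < n \<Longrightarrow> 0 \<le> f i" "0 \<le> t" "t \<le> (\<Sum>i<n. f i)" "0 < n"
  shows "\<exists>i<n. (\<Sum>j<i. f j) \<le> t \<and> t \<le> (\<Sum>j<Suc i. f j)"
  using assms(1,3,4)
proof (induction n)
  case 0
  then show ?case by simp
next
  case (Suc n)
  show ?case
  proof (cases "0 < n \<and> t \<le> (\<Sum>i<n. f i)")
    case True
    then show ?thesis using Suc by (metis less_Suc_eq)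
  next
    case False
    then have "(\<Sum>i<n. f i) \<le> t" using assms(2) by (cases "n = 0") auto
    then show ?thesis using Suc.prems by (intro exI[of _ n]) auto
  qed
qed

lemma flower_polar_form:
  fixes x :: "nat \<Rightarrow> complex" and \<theta> :: "nat \<Rightarrow> real"
  assumes "0 < n" and eps: "\<epsilon> = 1 \<or> \<epsilon> = -1" and "x 0 \<noteq> 0"
    and \<theta>: "\<And>i. i < n \<Longrightarrow> 0 \<le> \<theta> i"
    and x: "\<And>i. i < n \<Longrightarrow> x ((i + 1) mod n) = x i * cis (2 * \<epsilon> * \<theta> i)"
    and sum: "(\<Sum>i<n. 2 * \<theta> i) = 2 * pi"
  obtains i \<mu> s where "i < n" "0 \<le> \<mu>" "0 \<le> s" "s \<le> 2 * \<theta> i" "q = of_real \<mu> * x i * cis (\<epsilon> * s)"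
proof -
  define S where "S m = (\<Sum>i<m. 2 * \<theta> i)" for m
  have xS: "x i = x 0 * cis (\<epsilon> * S i)" if "i < n" for i
    using that
  proof (induction i)
    case 0
    then show ?case by (simp add: S_def)
  next
    case (Suc i)
    then have "x (Suc i) = x i * cis (2 * \<epsilon> * \<theta> i)" using x[of i] by simp
    also have "\<dots> = x 0 * cis (\<epsilon> * S i + 2 * \<epsilon> * \<theta> i)"
      using Suc by (simp add: mult.assoc flip: cis_mult)
    finally show ?case by (simp add: S_def algebra_simps)
  qed
  obtain \<mu> t where \<mu>: "0 \<le> \<mu>" and t: "0 \<le> t" "t \<le> 2 * pi"
    and q: "q = of_real \<mu> * x 0 * cis (\<epsilon> * t)"
    using polar_form_nonneg_angle[OF \<open>x 0 \<noteq> 0\<close> eps] .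
  obtain i where i: "i < n" "S i \<le> t" "t \<le> S i + 2 * \<theta> i"
    using partial_sums_bracket[of n "\<lambda>i. 2 * \<theta> i" t] \<theta> t sum \<open>0 < n\<close>
    by (fastforce simp: S_def)
  have "x i * cis (\<epsilon> * (t - S i)) = x 0 * cis (\<epsilon> * S i + \<epsilon> * (t - S i))"
    using xS[OF i(1)] by (simp add: mult.assoc flip: cis_mult)
  then have "q = of_real \<mu> * x i * cis (\<epsilon> * (t - S i))"
    unfolding q by (simp add: algebra_simps)
  moreover have "0 \<le> t - S i" "t - S i \<le> 2 * \<theta> i" using i by auto
  ultimately show ?thesis using that[OF i(1) \<mu>] by blast
qed

lemma flower_cone_cover:
  fixes x y :: "nat \<Rightarrow> complex" and \<theta> \<eta> :: "nat \<Rightarrow> real"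
  assumes "0 < n" and eps: "\<epsilon> = 1 \<or> \<epsilon> = -1" and "x 0 \<noteq> 0"
    and \<theta>: "\<And>i. i < n \<Longrightarrow> 0 < \<theta> i \<and> \<theta> i < pi"
    and y: "\<And>i. i < n \<Longrightarrow> 0 < \<eta> i \<and> y i = of_real (\<eta> i) * x i * cis (\<epsilon> * \<theta> i)"
    and x: "\<And>i. i < n \<Longrightarrow> x ((i + 1) mod n) = x i * cis (2 * \<epsilon> * \<theta> i)"
    and sum: "(\<Sum>i<n. 2 * \<theta> i) = 2 * pi"
  obtains i a b where "i < n" "0 \<le> a" "0 \<le> b"
    "q = of_real a * x i + of_real b * y i \<or> q = of_real a * x ((i + 1) mod n) + of_real b * y i"
proof -
  obtain i \<mu> s where i: "i < n" and \<mu>: "0 \<le> \<mu>" and s: "0 \<le> s" "s \<le> 2 * \<theta> i"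
    and q: "q = of_real \<mu> * x i * cis (\<epsilon> * s)"
    using flower_polar_form[OF \<open>0 < n\<close> eps \<open>x 0 \<noteq> 0\<close> _ x sum] \<theta> by (metis less_imp_le)
  note \<theta>i = \<theta>[OF i] and yi = y[OF i]
  have xcis: "x i * cis (\<epsilon> * \<theta> i) = of_real (1 / \<eta> i) * y i" using yi by simp
  show ?thesis
  proof (cases "s \<le> \<theta> i")
    case True
    obtain a b where ab: "0 \<le> a" "0 \<le> b" "cis (\<epsilon> * s) = of_real a + of_real b * cis (\<epsilon> * \<theta> i)"
      using cis_in_cone[OF eps _ _ s(1) True] \<theta>i by auto
    have "q = of_real (\<mu> * a) * x i + of_real (\<mu> * b) * (x i * cis (\<epsilon> * \<theta> i))"
      unfolding q ab(3) by (simp add: algebra_simps)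
    also have "\<dots> = of_real (\<mu> * a) * x i + of_real (\<mu> * b / \<eta> i) * y i"
      unfolding xcis by simp
    finally have "q = of_real (\<mu> * a) * x i + of_real (\<mu> * b / \<eta> i) * y i" .
    moreover have "0 \<le> \<mu> * a" "0 \<le> \<mu> * b / \<eta> i" using \<mu> ab yi by auto
    ultimately show ?thesis using that[OF i] by blast
  next
    case False
    obtain a b where ab: "0 \<le> a" "0 \<le> b"
      "cis (\<epsilon> * (s - \<theta> i)) = of_real a + of_real b * cis (\<epsilon> * \<theta> i)"
      using cis_in_cone[OF eps, of "\<theta> i" "s - \<theta> i"] \<theta>i s False by auto
    have "cis (\<epsilon> * s) = cis (\<epsilon> * \<theta> i) * cis (\<epsilon> * (s - \<theta> i))"
      by (simp add: cis_mult algebra_simps)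
    then have "q = of_real (\<mu> * a) * (x i * cis (\<epsilon> * \<theta> i))
        + of_real (\<mu> * b) * (x i * (cis (\<epsilon> * \<theta> i) * cis (\<epsilon> * \<theta> i)))"
      unfolding q ab(3) by (simp add: algebra_simps)
    also have "\<dots> = of_real (\<mu> * b) * x ((i + 1) mod n) + of_real (\<mu> * a / \<eta> i) * y i"
      unfolding xcis x[OF i] by (simp add: cis_mult algebra_simps)
    finally have "q = of_real (\<mu> * b) * x ((i + 1) mod n) + of_real (\<mu> * a / \<eta> i) * y i" .
    moreover have "0 \<le> \<mu> * b" "0 \<le> \<mu> * a / \<eta> i" using \<mu> ab yi by auto
    ultimately show ?thesis using that[OF i] by blast
  qed
qed

lemma circle_pattern_face:
  assumes "circle_pattern W B F \<alpha> c r" "(v, b1, w, b2) \<in> F"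
  shows "cmod (c b1 - c v) = r v" "cmod (c b2 - c v) = r v"
    "cmod (c b1 - c w) = r w" "cmod (c b2 - c w) = r w"
    "ang (c v) (c b1) (c w) = \<alpha> {v, w}" "ang (c v) (c b2) (c w) = \<alpha> {v, w}"
  using assms unfolding circle_pattern_def by fastforce+

lemma circle_pattern_kite_rotation:
  assumes cp: "circle_pattern W B F \<alpha> c r" and f: "(v, b1, w, b2) \<in> F"
    and ori: "kite_oriented \<epsilon> c (v, b1, w, b2)" and eps: "\<epsilon> = 1 \<or> \<epsilon> = -1"
  defines "\<theta> \<equiv> ang (c b1) (c v) (c w)"
  shows "c w \<noteq> c v" "0 < \<theta>" "\<theta> < pi"
    "c w - c v = of_real (cmod (c w - c v) / cmod (c b1 - c v)) * (c b1 - c v) * cis (\<epsilon> * \<theta>)"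
    "c b2 - c v = (c b1 - c v) * cis (2 * \<epsilon> * \<theta>)"
proof -
  let ?x = "c b1 - c v" and ?x' = "c b2 - c v" and ?y = "c w - c v"
  have radii: "cmod ?x' = cmod ?x" "cmod (?x' - ?y) = cmod (?x - ?y)"
    using circle_pattern_face[OF cp f] by simp_all
  have pos: "\<epsilon> * Im (cnj ?y * ?x') > 0" and neg: "\<epsilon> * Im (cnj ?y * ?x) < 0"
    using ori by auto
  note rot = kite_center_rotation[OF radii eps pos neg]
  have "\<theta> = ang ?x 0 ?y" unfolding \<theta>_def by (rule ang_translate)
  then show "0 < \<theta>" "\<theta> < pi"
    "?y = of_real (cmod ?y / cmod ?x) * ?x * cis (\<epsilon> * \<theta>)" "?x' = ?x * cis (2 * \<epsilon> * \<theta>)"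
    using rot by simp_all
  show "c w \<noteq> c v" using neg by auto
qed

lemma circle_pattern_cone_point_in_kite:
  assumes cp: "circle_pattern W B F \<alpha> c r" and f: "(v, b1, w, b2) \<in> F"
    and "\<alpha>\<^sub>0 \<le> \<alpha> {v, w}" "0 \<le> \<alpha>\<^sub>0" and u: "u = b1 \<or> u = b2"
    and z: "z - c v = of_real a * (c u - c v) + of_real b * (c w - c v)" "0 \<le> a" "0 \<le> b"
    and near: "cmod (z - c v) \<le> r v * sin \<alpha>\<^sub>0"
  shows "z \<in> kite c (v, b1, w, b2)"
proof -
  have "\<alpha>\<^sub>0 \<le> ang (c v) (c u) (c w)" "cmod (c u - c v) = r v"
    using u circle_pattern_face[OF cp f] assms(3) by auto
  then have "z \<in> convex hull {c v, c u, c w}"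
    using cone_point_in_triangle[OF assms(4) _ z] near by simp
  then show ?thesis using u by auto
qed

lemma interior_white_faces:
  assumes "interior_white W F v"
  obtains n bs ws where "0 < n" "v \<in> W"
    "faces_at_white F v = (\<lambda>i. (v, bs ! i, ws ! i, bs ! ((i + 1) mod n))) ` {..<n}"
    "inj_on (\<lambda>i. (v, bs ! i, ws ! i, bs ! ((i + 1) mod n))) {..<n}"
proof -
  obtain n bs ws where "n \<ge> 1" "length bs = n" "distinct bs" "v \<in> W"
    and fa: "faces_at_white F v = {(v, bs ! i, ws ! i, bs ! ((i + 1) mod n)) | i. i < n}"
    using assms unfolding interior_white_def by blast
  moreover have "inj_on (\<lambda>i. (v, bs ! i, ws ! i, bs ! ((i + 1) mod n))) {..<n}"
    using \<open>distinct bs\<close> \<open>length bs = n\<close> by (intro inj_onI) (simp add: nth_eq_iff_index_eq)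
  ultimately show ?thesis using that[of n bs ws] by (auto simp: fa)
qed

lemma interior_white_cball_subset_Dset:
  assumes cp: "circle_pattern W B F \<alpha> c r" and iw: "interior_white W F v"
    and \<alpha>: "\<forall>(v, b1, w, b2) \<in> F. \<alpha>\<^sub>0 \<le> \<alpha> {v, w}" and "0 \<le> \<alpha>\<^sub>0"
  shows "cball (c v) (r v * sin \<alpha>\<^sub>0) \<subseteq> Dset F c v"
proof
  obtain n bs ws where "0 < n" "v \<in> W"
    and fa: "faces_at_white F v = (\<lambda>i. (v, bs ! i, ws ! i, bs ! ((i + 1) mod n))) ` {..<n}"
    and inj: "inj_on (\<lambda>i. (v, bs ! i, ws ! i, bs ! ((i + 1) mod n))) {..<n}"
    using interior_white_faces[OF iw] .
  obtain \<epsilon> where eps: "\<epsilon> = 1 \<or> \<epsilon> = -1" and ori: "\<forall>f \<in> F. kite_oriented \<epsilon> c f"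
    using cp unfolding circle_pattern_def by auto
  define x where "x i = c (bs ! i) - c v" for i
  define y where "y i = c (ws ! i) - c v" for i
  define \<theta> where "\<theta> i = ang (c (bs ! i)) (c v) (c (ws ! i))" for i
  have face: "(v, bs ! i, ws ! i, bs ! ((i + 1) mod n)) \<in> F" if "i < n" for i
    using that fa unfolding faces_at_white_def by auto
  have "0 < r v" using cp \<open>v \<in> W\<close> unfolding circle_pattern_def by auto
  have xr: "cmod (x i) = r v" if "i < n" for i
    using circle_pattern_face(1)[OF cp face[OF that]] unfolding x_def .
  note rot = circle_pattern_kite_rotation[OF cp face _ eps, folded x_def y_def \<theta>_def]
  have \<theta>_bounds: "0 < \<theta> i \<and> \<theta> i < pi" if "i < n" for i
    using rot[OF that] ori face[OF that] by auto
  have y_eq: "0 < cmod (y i) / cmod (x i) \<and> y i = of_real (cmod (y i) / cmod (x i)) * x i * cis (\<epsilon> * \<theta> i)"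
    if "i < n" for i using rot[OF that] ori face[OF that] xr[OF that] \<open>0 < r v\<close> by (auto simp: y_def)
  have x_step: "x ((i + 1) mod n) = x i * cis (2 * \<epsilon> * \<theta> i)" if "i < n" for i
    using rot[OF that] ori face[OF that] by (auto simp: x_def)
  have "x 0 \<noteq> 0" using xr[OF \<open>0 < n\<close>] \<open>0 < r v\<close> by auto
  have "(\<Sum>i<n. 2 * \<theta> i) = (\<Sum>(v', b1, w, b2) \<in> faces_at_white F v. 2 * ang (c b1) (c v) (c w))"
    unfolding fa sum.reindex[OF inj] by (simp add: \<theta>_def)
  also have "\<dots> = 2 * pi" using cp iw unfolding circle_pattern_def by blast
  finally have sum: "(\<Sum>i<n. 2 * \<theta> i) = 2 * pi" .
  fix z assume "z \<in> cball (c v) (r v * sin \<alpha>\<^sub>0)"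
  then have near: "cmod (z - c v) \<le> r v * sin \<alpha>\<^sub>0" by (simp add: dist_norm norm_minus_commute)
  obtain i a b where i: "i < n" and ab: "0 \<le> a" "0 \<le> b"
    and cone: "z - c v = of_real a * x i + of_real b * y i \<or>
               z - c v = of_real a * x ((i + 1) mod n) + of_real b * y i"
    using flower_cone_cover[OF \<open>0 < n\<close> eps \<open>x 0 \<noteq> 0\<close> \<theta>_bounds y_eq x_step sum] .
  have "\<alpha>\<^sub>0 \<le> \<alpha> {v, ws ! i}" using \<alpha> face[OF i] by fast
  with cone have "z \<in> kite c (v, bs ! i, ws ! i, bs ! ((i + 1) mod n))"
    using circle_pattern_cone_point_in_kite[OF cp face[OF i] _ assms(4) _ _ ab near]
    unfolding x_def y_def by blast
  then show "z \<in> Dset F c v" using i unfolding Dset_def fa by auto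
qed

theorem lemma5p2:
  fixes \<alpha>\<^sub>0 :: real
  assumes "0 < \<alpha>\<^sub>0" and "\<alpha>\<^sub>0 \<le> pi / 2"
  shows "\<exists>C\<^sub>0 \<ge> 1. \<forall>(W :: 'v set) B F \<alpha> c r.
           bquad W B F \<and> admissible B F \<alpha> \<and>
           (\<forall>(v, b1, w, b2) \<in> F. \<alpha>\<^sub>0 \<le> \<alpha> {v, w} \<and> \<alpha> {v, w} < pi) \<and>
           circle_pattern W B F \<alpha> c r \<and>
           (\<forall>f \<in> F. convex (kite c f)) \<longrightarrow>
           (\<forall>v. interior_white W F v \<longrightarrow>
              (\<exists>z \<rho>. \<rho> > 0 \<and> cball z \<rho> \<subseteq> Sset F c r v \<and> r v \<le> C\<^sub>0 * \<rho>))"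
proof -
  have sin: "0 < sin \<alpha>\<^sub>0" "sin \<alpha>\<^sub>0 \<le> 1" using assms by (auto intro: sin_gt_zero)
  show ?thesis
  proof (intro exI[of _ "1 / sin \<alpha>\<^sub>0"] conjI allI impI)
    show "1 \<le> 1 / sin \<alpha>\<^sub>0" using sin by simp
    fix W :: "'v set" and B F \<alpha> c r v
    assume H: "bquad W B F \<and> admissible B F \<alpha> \<and>
        (\<forall>(v, b1, w, b2) \<in> F. \<alpha>\<^sub>0 \<le> \<alpha> {v, w} \<and> \<alpha> {v, w} < pi) \<and>
        circle_pattern W B F \<alpha> c r \<and> (\<forall>f \<in> F. convex (kite c f))"
      and iw: "interior_white W F v"
    from H have cp: "circle_pattern W B F \<alpha> c r"
      and \<alpha>: "\<forall>(v, b1, w, b2) \<in> F. \<alpha>\<^sub>0 \<le> \<alpha> {v, w}" by auto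
    have "0 < r v" using cp iw unfolding circle_pattern_def interior_white_def by auto
    have "cball (c v) (r v * sin \<alpha>\<^sub>0) \<subseteq> cball (c v) (r v)"
      using \<open>0 < r v\<close> sin by (intro subset_cball) (simp add: mult_left_le)
    then have "cball (c v) (r v * sin \<alpha>\<^sub>0) \<subseteq> Sset F c r v"
      using interior_white_cball_subset_Dset[OF cp iw \<alpha> less_imp_le[OF assms(1)]] unfolding Sset_def by blast
    then show "\<exists>z \<rho>. \<rho> > 0 \<and> cball z \<rho> \<subseteq> Sset F c r v \<and> r v \<le> 1 / sin \<alpha>\<^sub>0 * \<rho>"
      using \<open>0 < r v\<close> sin by (intro exI[of _ "c v"] exI[of _ "r v * sin \<alpha>\<^sub>0"]) auto
  qed
qed

end
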